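(* Let $A=(A_1,A_2)\in\mathbb{N}_0^2$, $u_0\in\mathbb{R}\setminus\{0\}$, $l$ an even natural number, and let $p,\bar p$ be real polynomials in $(x,y)$ with $p(x,y)=(y^{A_1}-u_0x^{A_2})^l\,\bar p(x,y)$ and $\bar p(0,0)=0$. Then $(0,0)$ is a point of local minimum of $p$ if and only if it is a point of local minimum of $\bar p$.
   Context: $\mathbb{N}=\{1,2,\dots\}$; $\mathbb{N}_0^2$ is the set of $(A_1,A_2)\in\mathbb{N}^2$ with $\gcd(A_1,A_2)=1$. A point of local minimum of $f$ at $(0,0)$ means $f(x,y)\ge f(0,0)$ for all $(x,y)$ in some neighborhood of $(0,0)$. *)

theory Defs
  imports "HOL-Analysis.Analysis"
begin

definition real_poly2 :: "(real \<Rightarrow> real \<Rightarrow> real) \<Rightarrow> bool" where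
  "real_poly2 f \<longleftrightarrow>
     (\<exists>(N::nat) (c::nat \<Rightarrow> nat \<Rightarrow> real). \<forall>x y. f x y = (\<Sum>i<N. \<Sum>j<N. c i j * x ^ i * y ^ j))"

definition local_min_origin :: "(real \<Rightarrow> real \<Rightarrow> real) \<Rightarrow> bool" where
  "local_min_origin f \<longleftrightarrow>
     (\<exists>U::(real \<times> real) set. open U \<and> (0,0) \<in> U \<and> (\<forall>x y. (x,y) \<in> U \<longrightarrow> f x y \<ge> f 0 0))"

end

theory Submission
  imports Defs
begin

text \<open>Since \<open>l\<close> is even, the factor \<open>q = (y^A1 - u0 x^A2)^l\<close> is nonnegative, so
  \<open>pbar \<ge> 0\<close> near the origin gives \<open>p = q pbar \<ge> 0\<close> there. Conversely, \<open>p \<ge> 0\<close> forces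
  \<open>pbar \<ge> 0\<close> wherever \<open>q > 0\<close>; on every vertical line the zeros of \<open>q\<close> have empty
  interior, so the continuity of \<open>pbar\<close> propagates \<open>pbar \<ge> 0\<close> to the zeros of \<open>q\<close>
  as well.\<close>

lemma real_poly2_continuous_on:
  assumes "real_poly2 f"
  shows "continuous_on UNIV (\<lambda>z. f (fst z) (snd z))"
proof -
  obtain N c where f: "\<And>x y. f x y = (\<Sum>i<N. \<Sum>j<N. c i j * x ^ i * y ^ j)"
    using assms unfolding real_poly2_def by blast
  show ?thesis
    unfolding f by (intro continuous_intros)
qed

lemma exists_near_power_neq:
  fixes y c :: real
  assumes "n \<ge> 1" and "e > 0"
  shows "\<exists>y'. \<bar>y' - y\<bar> < e \<and> y' ^ n \<noteq> c"
proof (cases "y ^ n = c")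
  case True
  define y' where "y' = (if y \<ge> 0 then y + e / 2 else y - e / 2)"
  have "\<bar>y\<bar> ^ n < \<bar>y'\<bar> ^ n"
    using assms by (intro power_strict_mono) (auto simp: y'_def)
  then have "y' ^ n \<noteq> c"
    using True by (metis power_abs less_irrefl)
  moreover have "\<bar>y' - y\<bar> < e"
    using assms by (simp add: y'_def)
  ultimately show ?thesis by blast
next
  case False
  then show ?thesis
    using \<open>e > 0\<close> by (intro exI[of _ y]) simp
qed

lemma local_min_origin_mult_iff:
  fixes q h :: "real \<Rightarrow> real \<Rightarrow> real"
  assumes q_nonneg: "\<And>x y. 0 \<le> q x y"
    and q_nonzero_near: "\<And>x y e. e > 0 \<Longrightarrow> \<exists>y'. \<bar>y' - y\<bar> < e \<and> q x y' \<noteq> 0"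
    and h_cont: "continuous_on UNIV (\<lambda>z. h (fst z) (snd z))"
    and "h 0 0 = 0"
  shows "local_min_origin (\<lambda>x y. q x y * h x y) \<longleftrightarrow> local_min_origin h"
proof
  assume "local_min_origin (\<lambda>x y. q x y * h x y)"
  then obtain U where U: "open U" "(0, 0) \<in> U"
    and qh_nonneg: "\<And>x y. (x, y) \<in> U \<Longrightarrow> 0 \<le> q x y * h x y"
    unfolding local_min_origin_def using \<open>h 0 0 = 0\<close> by auto
  define S where "S = {z \<in> U. q (fst z) (snd z) \<noteq> 0}"
  have "S \<subseteq> {z. 0 \<le> h (fst z) (snd z)}"
  proof safe
    fix x y assume "(x, y) \<in> S"
    then have "0 < q x y" and "0 \<le> q x y * h x y"
      using q_nonneg[of x y] qh_nonneg by (auto simp: S_def)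
    then show "0 \<le> h (fst (x, y)) (snd (x, y))"
      by (simp add: zero_le_mult_iff)
  qed
  moreover have "closed {z. 0 \<le> h (fst z) (snd z)}"
    using h_cont by (intro closed_Collect_le continuous_intros)
  ultimately have closure_S: "closure S \<subseteq> {z. 0 \<le> h (fst z) (snd z)}"
    by (rule closure_minimal)
  have "U \<subseteq> closure S"
  proof
    fix z assume "z \<in> U"
    obtain x y where z: "z = (x, y)" by fastforce
    show "z \<in> closure S"
      unfolding closure_approachable
    proof (intro allI impI)
      fix e :: real assume "e > 0"
      obtain d where "d > 0" and d: "\<And>w. dist w z < d \<Longrightarrow> w \<in> U"
        using \<open>open U\<close> \<open>z \<in> U\<close> open_dist by metis
      obtain y' where y': "\<bar>y' - y\<bar> < min d e" "q x y' \<noteq> 0"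
        using q_nonzero_near \<open>d > 0\<close> \<open>e > 0\<close> by (metis min_less_iff_conj)
      have "dist (x, y') z < min d e"
        using y'(1) by (simp add: z dist_Pair_Pair dist_real_def)
      then have "(x, y') \<in> S"
        using d y'(2) by (simp add: S_def)
      then show "\<exists>w\<in>S. dist w z < e"
        using \<open>dist (x, y') z < min d e\<close> by force
    qed
  qed
  with closure_S have "0 \<le> h x y" if "(x, y) \<in> U" for x y
    using that by fastforce
  then show "local_min_origin h"
    unfolding local_min_origin_def \<open>h 0 0 = 0\<close> using U by blast
next
  assume "local_min_origin h"
  then show "local_min_origin (\<lambda>x y. q x y * h x y)"
    unfolding local_min_origin_def \<open>h 0 0 = 0\<close> using q_nonneg by auto
qed

theorem mainTheorem14:
  fixes A1 A2 :: nat and u0 :: real and l :: nat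
    and p pbar :: "real \<Rightarrow> real \<Rightarrow> real"
  assumes "A1 \<ge> 1" and "A2 \<ge> 1" and "coprime A1 A2"
    and "u0 \<noteq> 0"
    and "l \<ge> 1" and "even l"
    and "real_poly2 p" and "real_poly2 pbar"
    and "\<And>x y. p x y = (y ^ A1 - u0 * x ^ A2) ^ l * pbar x y"
    and "pbar 0 0 = 0"
  shows "local_min_origin p \<longleftrightarrow> local_min_origin pbar"
proof -
  define q where "q x y = (y ^ A1 - u0 * x ^ A2) ^ l" for x y
  have "p = (\<lambda>x y. q x y * pbar x y)"
    using assms(9) by (simp add: q_def fun_eq_iff)
  moreover have "local_min_origin (\<lambda>x y. q x y * pbar x y) \<longleftrightarrow> local_min_origin pbar"
  proof (rule local_min_origin_mult_iff)
    show "0 \<le> q x y" for x y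
      using \<open>even l\<close> by (simp add: q_def zero_le_even_power)
    show "\<exists>y'. \<bar>y' - y\<bar> < e \<and> q x y' \<noteq> 0" if "e > 0" for x y e
      using exists_near_power_neq[OF \<open>A1 \<ge> 1\<close> \<open>e > 0\<close>, of y "u0 * x ^ A2"]
      by (auto simp: q_def)
  qed (use real_poly2_continuous_on[OF \<open>real_poly2 pbar\<close>] \<open>pbar 0 0 = 0\<close> in auto)
  ultimately show ?thesis
    by simp
qed

end
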